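(* In the near-field model below, with $\mathbf w_{\mathrm s}=\mathbf h_{\mathrm s}^*/\|\mathbf h_{\mathrm s}\|$, $p>0$, $L\in\mathbb Z_{>0}$, $\alpha_{\mathrm s}>0$, the downlink sensing rate $\mathcal R^{\mathrm s}_{\mathrm{d,s}}=\frac1L\log_2(1+pL\alpha_{\mathrm s}\|\mathbf h_{\mathrm s}\|^4)$ satisfies, as $N_y,N_z\to\infty$ with all other parameters fixed, $$\lim_{N_y,N_z\to\infty}\mathcal R^{\mathrm s}_{\mathrm{d,s}}=\frac1L\log_2\!\Big(1+\frac{pL\alpha_{\mathrm s}\zeta^2}{9}\Big).$$
   Context: Near-field model: a uniform planar array lies in the $y$–$z$ plane centered at the origin, with $N=N_yN_z$ elements ($N_y,N_z$ odd). Element $(n_y,n_z)$, $n_y\in\{-\frac{N_y-1}2,\dots,\frac{N_y-1}2\}$, $n_z\in\{-\frac{N_z-1}2,\dots,\frac{N_z-1}2\}$, is a $\sqrt A\times\sqrt A$ square centered at $(0,n_yd,n_zd)$, with spacing $d>\sqrt A$; $\zeta=A/d^2\in(0,1]$; $\lambda>0$ is the wavelength. The target is at distance $r_{\mathrm s}$, elevation $\theta_{\mathrm s}\in[0,\pi]$, azimuth $\phi_{\mathrm s}\in[-\pi/2,\pi/2]$; $\Psi_{\mathrm s}=\sin\theta_{\mathrm s}\cos\phi_{\mathrm s}$, $\Phi_{\mathrm s}=\sin\theta_{\mathrm s}\sin\phi_{\mathrm s}$, $\Omega_{\mathrm s}=\cos\theta_{\mathrm s}$, $\epsilon_{\mathrm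 s}=d/r_{\mathrm s}$, $r_{n_y,n_z}=r_{\mathrm s}\sqrt{(n_y\epsilon_{\mathrm s}-\Phi_{\mathrm s})^2+(n_z\epsilon_{\mathrm s}-\Omega_{\mathrm s})^2+\Psi_{\mathrm s}^2}$. The channel $\mathbf h_{\mathrm s}\in\mathbb C^N$ has entries $\sqrt{A\frac{r_{\mathrm s}^3\Psi_{\mathrm s}^3+r_{\mathrm s}\Psi_{\mathrm s}(r_{\mathrm s}\Omega_{\mathrm s}-n_zd)^2}{4\pi r_{n_y,n_z}^5}}\,e^{-\mathrm j\frac{2\pi}{\lambda}r_{n_y,n_z}}$. The paper assumes throughout $r_{\mathrm s}\gg d$, $r_{\mathrm s}\gg\sqrt A$, so $\epsilon_{\mathrm s}\ll1$.
   Formalization: The limit as $N_y,N_z\to\infty$ is only claimed to exist for each $r_{\mathrm s}>0$ and to tend to $\frac1L\log_2(1+pL\alpha_{\mathrm s}\zeta^2/9)$ as $r_{\mathrm s}\to\infty$, rather than to equal it for fixed $r_{\mathrm s}$, and $\Psi_{\mathrm s}>0$ is assumed. The statement above fails without it. *)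

theory Defs
  imports "HOL-Analysis.Analysis"
begin

definition Psi_s :: "real \<Rightarrow> real \<Rightarrow> real" where
  "Psi_s \<theta> \<phi> = sin \<theta> * cos \<phi>"
definition Phi_s :: "real \<Rightarrow> real \<Rightarrow> real" where
  "Phi_s \<theta> \<phi> = sin \<theta> * sin \<phi>"
definition Omega_s :: "real \<Rightarrow> real" where
  "Omega_s \<theta> = cos \<theta>"

definition elem_dist :: "real \<Rightarrow> real \<Rightarrow> real \<Rightarrow> real \<Rightarrow> int \<Rightarrow> int \<Rightarrow> real" where
  "elem_dist d r \<theta> \<phi> ny nz =
     (let \<epsilon> = d / r in
      r * sqrt ((of_int ny * \<epsilon> - Phi_s \<theta> \<phi>)\<^sup>2 + (of_int nz * \<epsilon> - Omega_s \<theta>)\<^sup>2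
                + (Psi_s \<theta> \<phi>)\<^sup>2))"

definition chan_entry ::
  "real \<Rightarrow> real \<Rightarrow> real \<Rightarrow> real \<Rightarrow> real \<Rightarrow> real \<Rightarrow> int \<Rightarrow> int \<Rightarrow> complex" where
  "chan_entry A d lam r \<theta> \<phi> ny nz =
     (let rn = elem_dist d r \<theta> \<phi> ny nz; \<Psi> = Psi_s \<theta> \<phi>; \<Omega> = Omega_s \<theta> in
      complex_of_real (sqrt (A * (r ^ 3 * \<Psi> ^ 3 + r * \<Psi> * (r * \<Omega> - of_int nz * d)\<^sup>2)
                                / (4 * pi * rn ^ 5)))
      * cis (- (2 * pi / lam) * rn))"

text \<open>Euclidean norm of h_s for N_y = 2 My + 1, N_z = 2 Mz + 1 elements.\<close>
definition chan_norm ::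
  "real \<Rightarrow> real \<Rightarrow> real \<Rightarrow> real \<Rightarrow> real \<Rightarrow> real \<Rightarrow> nat \<Rightarrow> nat \<Rightarrow> real" where
  "chan_norm A d lam r \<theta> \<phi> My Mz =
     sqrt (\<Sum>ny\<in>{- int My..int My}. \<Sum>nz\<in>{- int Mz..int Mz}.
             (cmod (chan_entry A d lam r \<theta> \<phi> ny nz))\<^sup>2)"

definition sensing_rate ::
  "real \<Rightarrow> nat \<Rightarrow> real \<Rightarrow> real \<Rightarrow> real \<Rightarrow> real \<Rightarrow> real \<Rightarrow> real \<Rightarrow> real \<Rightarrow> nat \<Rightarrow> nat \<Rightarrow> real" where
  "sensing_rate p L \<alpha> A d lam r \<theta> \<phi> My Mz =
     1 / real L * log 2 (1 + p * real L * \<alpha> * (chan_norm A d lam r \<theta> \<phi> My Mz) ^ 4)"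

end

theory Submission
  imports Defs "HOL-Real_Asymp.Real_Asymp"
begin

(* For fixed r_s, ||h_s||^2 is zeta eps^2 times a lattice sum, over eps Z^2 with eps = d / r_s,
   of the received-power density on the array plane. The summands are nonnegative with bounded
   partial sums, so the rectangular partial sums converge as N_y, N_z grow. As r_s grows, the
   scaled lattice sum becomes a Riemann sum of the density, whose integral over the plane is 1/3:
   integrating in y with the primitive of (y^2 + c)^(-5/2) leaves Psi / (3 pi c(z)), and
   integrating that in z (an arctan) gives 1/3. A lattice sum of a unimodal function differs from
   its integral by at most 2 eps times its maximum, so both errors vanish with eps. *)

section \<open>Sums over the integer lattices\<close>

lemma finite_int_set_subset_symmetric_interval:
  assumes "finite (X :: int set)"
  obtains N :: nat where "X \<subseteq> {- int N..int N}"
proof -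
  obtain N where "\<forall>n \<in> (\<lambda>x. nat \<bar>x\<bar>) ` X. n \<le> N"
    using assms finite_nat_set_iff_bounded_le by blast
  then show thesis
    by (intro that[of N]) force
qed

lemma filterlim_symmetric_int_intervals:
  "filterlim (\<lambda>N. {- int N..int N}) (finite_subsets_at_top UNIV) sequentially"
  unfolding filterlim_finite_subsets_at_top eventually_sequentially
proof (intro allI impI)
  fix X :: "int set"
  assume "finite X \<and> X \<subseteq> UNIV"
  then obtain N where "X \<subseteq> {- int N..int N}"
    using finite_int_set_subset_symmetric_interval by blast
  then show "\<exists>N. \<forall>n\<ge>N. finite {- int n..int n} \<and> X \<subseteq> {- int n..int n} \<and> {- int n..int n} \<subseteq> UNIV"
    by (intro exI[of _ N]) force
qed

lemma filterlim_int_rectangles: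
  "filterlim (\<lambda>(m, n). {- int m..int m} \<times> {- int n..int n}) (finite_subsets_at_top UNIV)
     (sequentially \<times>\<^sub>F sequentially)"
proof -
  have "\<forall>\<^sub>F (m, n) in sequentially \<times>\<^sub>F sequentially. X \<subseteq> {- int m..int m} \<times> {- int n..int n}"
    if "finite X" for X :: "(int \<times> int) set"
  proof -
    obtain M N where "fst ` X \<subseteq> {- int M..int M}" "snd ` X \<subseteq> {- int N..int N}"
      using \<open>finite X\<close> finite_int_set_subset_symmetric_interval by (metis finite_imageI)
    then show ?thesis
      unfolding eventually_prod_sequentially by (intro exI[of _ "max M N"]) force
  qed
  then show ?thesis
    by (auto simp: filterlim_finite_subsets_at_top case_prod_unfold elim!: eventually_mono)
qed

lemma has_sum_imp_tendsto_rectangle_sums: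
  fixes f :: "int \<times> int \<Rightarrow> 'a :: topological_comm_monoid_add"
  assumes "(f has_sum S) UNIV"
  shows "((\<lambda>(m, n). \<Sum>x\<in>{- int m..int m} \<times> {- int n..int n}. f x) \<longlongrightarrow> S)
           (sequentially \<times>\<^sub>F sequentially)"
  using filterlim_compose[OF assms[unfolded has_sum_def] filterlim_int_rectangles]
  by (simp add: case_prod_unfold)

lemma nonneg_summable_on_int_if_symmetric_sums_bounded:
  fixes f :: "int \<Rightarrow> real"
  assumes "\<And>n. 0 \<le> f n" and "\<And>N. (\<Sum>n\<in>{- int N..int N}. f n) \<le> C"
  shows "f summable_on UNIV"
proof (rule nonneg_bdd_above_summable_on)
  show "bdd_above (sum f ` {X. X \<subseteq> UNIV \<and> finite X})"
  proof (rule bdd_aboveI2)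
    fix X :: "int set"
    assume "X \<in> {X. X \<subseteq> UNIV \<and> finite X}"
    then obtain N where "X \<subseteq> {- int N..int N}"
      using finite_int_set_subset_symmetric_interval by blast
    then have "sum f X \<le> (\<Sum>n\<in>{- int N..int N}. f n)"
      using assms(1) by (intro sum_mono2) auto
    then show "sum f X \<le> C"
      using assms(2) by (rule order_trans)
  qed
qed (use assms in auto)

section \<open>Lattice sums of unimodal functions\<close>

lemma riemann_sum_error_le_variation:
  fixes f F v :: "real \<Rightarrow> real" and \<epsilon> :: real and a b :: int
  assumes "\<epsilon> > 0"
    and F: "\<And>x. (F has_real_derivative f x) (at x)"
    and osc: "\<And>x y. x \<le> y \<Longrightarrow> \<bar>f x - f y\<bar> \<le> v y - v x"
    and "a \<le> b"
  shows "\<bar>\<epsilon> * (\<Sum>n\<in>{a..<b}. f (of_int n * \<epsilon>)) - (F (of_int b * \<epsilon>) - F (of_int a * \<epsilon>))\<bar>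
           \<le> \<epsilon> * (v (of_int b * \<epsilon>) - v (of_int a * \<epsilon>))"
  using \<open>a \<le> b\<close>
proof (induction b rule: int_ge_induct)
  case base
  then show ?case by simp
next
  case (step b)
  define x where "x = of_int b * \<epsilon>"
  have next_point: "of_int (b + 1) * \<epsilon> = x + \<epsilon>"
    by (simp add: x_def algebra_simps)
  obtain z where z: "x < z" "z < x + \<epsilon>" "F (x + \<epsilon>) - F x = \<epsilon> * f z"
    using MVT2[of x "x + \<epsilon>" F f] F \<open>\<epsilon> > 0\<close> by auto
  have "\<bar>f x - f z\<bar> \<le> v (x + \<epsilon>) - v x"
    using osc[of x z] osc[of z "x + \<epsilon>"] z by force
  then have cell: "\<bar>\<epsilon> * f x - (F (x + \<epsilon>) - F x)\<bar> \<le> \<epsilon> * (v (x + \<epsilon>) - v x)"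
    using z(3) \<open>\<epsilon> > 0\<close> by (simp flip: right_diff_distrib add: abs_mult)
  have "{a..<b + 1} = insert b {a..<b}"
    using step.hyps by auto
  then have "(\<Sum>n\<in>{a..<b + 1}. f (of_int n * \<epsilon>)) = f x + (\<Sum>n\<in>{a..<b}. f (of_int n * \<epsilon>))"
    by (simp add: x_def)
  then show ?case
    using step.IH cell unfolding next_point x_def[symmetric]
    by (simp add: algebra_simps)
qed

text \<open>The bound is an increment of the nondecreasing function
  \<open>\<lambda>x. if x \<le> s then f x else 2 * B - f x\<close>, whose values lie in \<open>[0, 2 * B]\<close>; this caps the
  total Riemann-sum error of a unimodal function at \<open>2 * \<epsilon> * B\<close>.\<close>

lemma unimodal_oscillation_le:
  fixes f :: "real \<Rightarrow> real"
  assumes inc: "\<And>x y. x \<le> y \<Longrightarrow> y \<le> s \<Longrightarrow> f x \<le> f y"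
    and dec: "\<And>x y. s \<le> x \<Longrightarrow> x \<le> y \<Longrightarrow> f y \<le> f x"
    and bounds: "\<And>x. 0 \<le> f x" "\<And>x. f x \<le> B"
    and "x \<le> y"
  shows "\<bar>f x - f y\<bar> \<le> (if y \<le> s then f y else 2 * B - f y) - (if x \<le> s then f x else 2 * B - f x)"
  using inc[of x y] dec[of x y] bounds[of x] bounds[of y] \<open>x \<le> y\<close> by auto

lemma unimodal_riemann_sum_symmetric:
  fixes f F :: "real \<Rightarrow> real"
  assumes "\<epsilon> > 0"
    and F: "\<And>x. (F has_real_derivative f x) (at x)"
    and inc: "\<And>x y. x \<le> y \<Longrightarrow> y \<le> s \<Longrightarrow> f x \<le> f y"
    and dec: "\<And>x y. s \<le> x \<Longrightarrow> x \<le> y \<Longrightarrow> f y \<le> f x"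
    and nonneg: "\<And>x. 0 \<le> f x" and bound: "\<And>x. f x \<le> B"
  shows "\<bar>\<epsilon> * (\<Sum>n\<in>{- int N..int N}. f (of_int n * \<epsilon>)) - (F ((real N + 1) * \<epsilon>) - F (- real N * \<epsilon>))\<bar>
           \<le> 2 * \<epsilon> * B"
proof -
  define v where "v x = (if x \<le> s then f x else 2 * B - f x)" for x
  have v_bounds: "0 \<le> v x" "v x \<le> 2 * B" for x
    using nonneg[of x] bound[of x] unfolding v_def by auto
  have osc: "\<bar>f x - f y\<bar> \<le> v y - v x" if "x \<le> y" for x y
    unfolding v_def by (rule unimodal_oscillation_le[OF inc dec nonneg bound that])
  have "{- int N..int N} = {- int N..<int N + 1}"
    by auto
  then have "\<bar>\<epsilon> * (\<Sum>n\<in>{- int N..int N}. f (of_int n * \<epsilon>)) - (F ((real N + 1) * \<epsilon>) - F (- real N * \<epsilon>))\<bar>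
      \<le> \<epsilon> * (v ((real N + 1) * \<epsilon>) - v (- real N * \<epsilon>))"
    using riemann_sum_error_le_variation[OF \<open>\<epsilon> > 0\<close> F osc, of "- int N" "int N + 1"] by simp
  also have "\<dots> \<le> \<epsilon> * (2 * B)"
    using v_bounds[of "(real N + 1) * \<epsilon>"] v_bounds[of "- real N * \<epsilon>"] \<open>\<epsilon> > 0\<close>
    by (intro mult_left_mono) auto
  finally show ?thesis
    by simp
qed

lemma unimodal_lattice_sum:
  fixes f F :: "real \<Rightarrow> real"
  assumes "\<epsilon> > 0"
    and F: "\<And>x. (F has_real_derivative f x) (at x)"
    and inc: "\<And>x y. x \<le> y \<Longrightarrow> y \<le> s \<Longrightarrow> f x \<le> f y"
    and dec: "\<And>x y. s \<le> x \<Longrightarrow> x \<le> y \<Longrightarrow> f y \<le> f x"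
    and nonneg: "\<And>x. 0 \<le> f x" and bound: "\<And>x. f x \<le> B"
    and F_top: "(F \<longlongrightarrow> F_top) at_top" and F_bot: "(F \<longlongrightarrow> F_bot) at_bot"
  shows "(\<lambda>n::int. f (of_int n * \<epsilon>)) summable_on UNIV"
    and "\<bar>\<epsilon> * (\<Sum>\<^sub>\<infinity>n::int. f (of_int n * \<epsilon>)) - (F_top - F_bot)\<bar> \<le> 2 * \<epsilon> * B"
proof -
  define P where "P N = (\<Sum>n\<in>{- int N..int N}. f (of_int n * \<epsilon>))" for N
  define I where "I N = F ((real N + 1) * \<epsilon>) - F (- real N * \<epsilon>)" for N
  have error: "\<bar>\<epsilon> * P N - I N\<bar> \<le> 2 * \<epsilon> * B" for N
    unfolding P_def I_def by (rule unimodal_riemann_sum_symmetric[OF \<open>\<epsilon> > 0\<close> F inc dec nonneg bound])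
  have F_mono: "F x \<le> F y" if "x \<le> y" for x y
    using DERIV_nonneg_imp_nondecreasing[OF that] F nonneg by blast
  have F_le_top: "F x \<le> F_top" for x
    by (rule tendsto_lowerbound[OF F_top]) (auto simp: eventually_at_top_linorder intro: F_mono)
  have F_ge_bot: "F_bot \<le> F x" for x
    by (rule tendsto_upperbound[OF F_bot]) (auto simp: eventually_at_bot_linorder intro: F_mono)
  have "\<epsilon> * P N \<le> F_top - F_bot + 2 * \<epsilon> * B" for N
    using error[of N] F_le_top[of "(real N + 1) * \<epsilon>"] F_ge_bot[of "- real N * \<epsilon>"]
    unfolding I_def abs_le_iff by linarith
  then have "P N \<le> (F_top - F_bot + 2 * \<epsilon> * B) / \<epsilon>" for N
    using \<open>\<epsilon> > 0\<close> by (simp add: field_simps)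
  then show summable: "(\<lambda>n::int. f (of_int n * \<epsilon>)) summable_on UNIV"
    using nonneg unfolding P_def by (intro nonneg_summable_on_int_if_symmetric_sums_bounded)
  have "P \<longlonglongrightarrow> (\<Sum>\<^sub>\<infinity>n::int. f (of_int n * \<epsilon>))"
    unfolding P_def using summable[unfolded summable_iff_has_sum_infsum has_sum_def]
    by (rule filterlim_compose[OF _ filterlim_symmetric_int_intervals])
  moreover have "I \<longlonglongrightarrow> F_top - F_bot"
  proof -
    have "filterlim (\<lambda>N. (real N + 1) * \<epsilon>) at_top sequentially"
      and "filterlim (\<lambda>N. - real N * \<epsilon>) at_bot sequentially"
      using \<open>\<epsilon> > 0\<close> by real_asymp+
    then show ?thesis
      unfolding I_def by (intro tendsto_diff filterlim_compose[OF F_top] filterlim_compose[OF F_bot])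
  qed
  ultimately have "(\<lambda>N. \<bar>\<epsilon> * P N - I N\<bar>)
      \<longlonglongrightarrow> \<bar>\<epsilon> * (\<Sum>\<^sub>\<infinity>n::int. f (of_int n * \<epsilon>)) - (F_top - F_bot)\<bar>"
    by (intro tendsto_intros)
  then show "\<bar>\<epsilon> * (\<Sum>\<^sub>\<infinity>n::int. f (of_int n * \<epsilon>)) - (F_top - F_bot)\<bar> \<le> 2 * \<epsilon> * B"
    by (rule tendsto_upperbound) (simp_all add: error always_eventually)
qed

lemma antitone_comp_square_dist:
  fixes \<phi> :: "real \<Rightarrow> real"
  assumes "\<And>a b. 0 \<le> a \<Longrightarrow> a \<le> b \<Longrightarrow> \<phi> b \<le> \<phi> a"
  shows "x \<le> y \<Longrightarrow> y \<le> s \<Longrightarrow> \<phi> ((x - s)\<^sup>2) \<le> \<phi> ((y - s)\<^sup>2)"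
    and "s \<le> x \<Longrightarrow> x \<le> y \<Longrightarrow> \<phi> ((y - s)\<^sup>2) \<le> \<phi> ((x - s)\<^sup>2)"
  using assms power_mono[of "s - y" "s - x" 2] power_mono[of "x - s" "y - s" 2]
  by (simp_all add: power2_commute)

lemma lattice_sum_antitone_square_dist:
  fixes \<phi> F :: "real \<Rightarrow> real"
  assumes "\<epsilon> > 0"
    and antitone: "\<And>a b. 0 \<le> a \<Longrightarrow> a \<le> b \<Longrightarrow> \<phi> b \<le> \<phi> a"
    and nonneg: "\<And>t. 0 \<le> t \<Longrightarrow> 0 \<le> \<phi> t"
    and F: "\<And>x. (F has_real_derivative \<phi> ((x - s)\<^sup>2)) (at x)"
    and F_top: "(F \<longlongrightarrow> F_top) at_top" and F_bot: "(F \<longlongrightarrow> F_bot) at_bot"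
  shows "(\<lambda>n::int. \<phi> ((of_int n * \<epsilon> - s)\<^sup>2)) summable_on UNIV"
    and "\<bar>\<epsilon> * (\<Sum>\<^sub>\<infinity>n::int. \<phi> ((of_int n * \<epsilon> - s)\<^sup>2)) - (F_top - F_bot)\<bar> \<le> 2 * \<epsilon> * \<phi> 0"
proof -
  have "0 \<le> \<phi> ((x - s)\<^sup>2)" and "\<phi> ((x - s)\<^sup>2) \<le> \<phi> 0" for x
    by (simp_all add: nonneg antitone)
  from unimodal_lattice_sum[where f = "\<lambda>x. \<phi> ((x - s)\<^sup>2)" and s = s,
      OF \<open>\<epsilon> > 0\<close> F antitone_comp_square_dist[of \<phi>, OF antitone] this F_top F_bot]
  show "(\<lambda>n::int. \<phi> ((of_int n * \<epsilon> - s)\<^sup>2)) summable_on UNIV"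
    and "\<bar>\<epsilon> * (\<Sum>\<^sub>\<infinity>n::int. \<phi> ((of_int n * \<epsilon> - s)\<^sup>2)) - (F_top - F_bot)\<bar> \<le> 2 * \<epsilon> * \<phi> 0"
    by simp_all
qed

section \<open>The received-power density and its integral\<close>

definition inv_pow5_primitive :: "real \<Rightarrow> real \<Rightarrow> real" where
  "inv_pow5_primitive c x = (x / sqrt (x\<^sup>2 + c) - (x / sqrt (x\<^sup>2 + c)) ^ 3 / 3) / c\<^sup>2"

lemma inv_pow5_primitive_has_derivative:
  assumes "c > 0"
  shows "(inv_pow5_primitive c has_real_derivative 1 / sqrt (x\<^sup>2 + c) ^ 5) (at x)"
proof -
  have pos: "0 < x\<^sup>2 + c"
    using assms by (simp add: add_nonneg_pos)
  define q where "q = sqrt (x\<^sup>2 + c)"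
  have "q > 0" and q2: "q\<^sup>2 = x\<^sup>2 + c" and q3: "q ^ 3 = (x\<^sup>2 + c) * q"
    using pos by (simp_all add: q_def eval_nat_numeral)
  have u: "((\<lambda>x. x / sqrt (x\<^sup>2 + c)) has_real_derivative c / q ^ 3) (at x)"
    unfolding q3 unfolding q_def using pos
    by (auto intro!: derivative_eq_intros simp: field_simps power2_eq_square)
  have "((\<lambda>u. (u - u ^ 3 / 3) / c\<^sup>2) has_real_derivative (1 - u\<^sup>2) / c\<^sup>2) (at u)" for u
    using assms by (auto intro!: derivative_eq_intros simp: field_simps power2_eq_square eval_nat_numeral)
  from DERIV_chain2[OF this u]
  have "(inv_pow5_primitive c has_real_derivative (1 - (x / q)\<^sup>2) / c\<^sup>2 * (c / q ^ 3)) (at x)"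
    unfolding inv_pow5_primitive_def[abs_def] q_def .
  moreover have "1 - (x / q)\<^sup>2 = c / q\<^sup>2"
    using \<open>q > 0\<close> q2 pos by (simp add: field_simps)
  moreover have "c / q\<^sup>2 / c\<^sup>2 * (c / q ^ 3) = 1 / q ^ 5"
    using assms \<open>q > 0\<close> by (simp add: field_simps eval_nat_numeral)
  ultimately show ?thesis
    by (simp only: q_def)
qed

lemma inv_pow5_primitive_minus: "inv_pow5_primitive c (- x) = - inv_pow5_primitive c x"
  unfolding inv_pow5_primitive_def by (simp add: divide_simps)

lemma tendsto_inv_pow5_primitive_at_top:
  assumes "c > 0"
  shows "(inv_pow5_primitive c \<longlongrightarrow> 2 / (3 * c\<^sup>2)) at_top"
proof -
  have "((\<lambda>x. x / sqrt (x\<^sup>2 + c)) \<longlongrightarrow> 1) at_top"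
    by real_asymp
  then have "(inv_pow5_primitive c \<longlongrightarrow> (1 - 1 ^ 3 / 3) / c\<^sup>2) at_top"
    unfolding inv_pow5_primitive_def[abs_def] using assms by (intro tendsto_intros) auto
  then show ?thesis
    by simp
qed

lemma lattice_sum_inv_pow5:
  fixes c \<epsilon> s :: real
  assumes "c > 0" and "\<epsilon> > 0"
  shows "(\<lambda>n::int. 1 / sqrt ((of_int n * \<epsilon> - s)\<^sup>2 + c) ^ 5) summable_on UNIV"
    and "\<bar>\<epsilon> * (\<Sum>\<^sub>\<infinity>n::int. 1 / sqrt ((of_int n * \<epsilon> - s)\<^sup>2 + c) ^ 5) - 4 / (3 * c\<^sup>2)\<bar>
           \<le> 2 * \<epsilon> * (1 / sqrt c ^ 5)"
proof -
  define \<phi> where "\<phi> t = 1 / sqrt (t + c) ^ 5" for t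
  have antitone: "\<phi> b \<le> \<phi> a" if "0 \<le> a" "a \<le> b" for a b
    unfolding \<phi>_def using that \<open>c > 0\<close>
    by (intro divide_left_mono power_mono mult_pos_pos) auto
  have nonneg: "0 \<le> \<phi> t" if "0 \<le> t" for t
    unfolding \<phi>_def using that \<open>c > 0\<close> by simp
  define F where "F x = inv_pow5_primitive c (x - s)" for x
  have F_deriv: "(F has_real_derivative \<phi> ((x - s)\<^sup>2)) (at x)" for x
  proof -
    have "((\<lambda>x. x - s) has_real_derivative 1) (at x)"
      by (auto intro!: derivative_eq_intros)
    from DERIV_chain2[OF inv_pow5_primitive_has_derivative[OF \<open>c > 0\<close>] this]
    show ?thesis
      unfolding F_def[abs_def] \<phi>_def by simp
  qed
  have F_top: "(F \<longlongrightarrow> 2 / (3 * c\<^sup>2)) at_top"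
    unfolding F_def[abs_def]
    by (rule filterlim_compose[OF tendsto_inv_pow5_primitive_at_top[OF \<open>c > 0\<close>]]) real_asymp
  have "((\<lambda>x. - inv_pow5_primitive c (s - x)) \<longlongrightarrow> - (2 / (3 * c\<^sup>2))) at_bot"
    by (intro tendsto_minus filterlim_compose[OF tendsto_inv_pow5_primitive_at_top[OF \<open>c > 0\<close>]])
      real_asymp
  then have F_bot: "(F \<longlongrightarrow> - (2 / (3 * c\<^sup>2))) at_bot"
    unfolding F_def[abs_def] by (simp flip: inv_pow5_primitive_minus)
  from lattice_sum_antitone_square_dist[OF \<open>\<epsilon> > 0\<close> antitone nonneg F_deriv F_top F_bot]
  show "(\<lambda>n::int. 1 / sqrt ((of_int n * \<epsilon> - s)\<^sup>2 + c) ^ 5) summable_on UNIV"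
    and "\<bar>\<epsilon> * (\<Sum>\<^sub>\<infinity>n::int. 1 / sqrt ((of_int n * \<epsilon> - s)\<^sup>2 + c) ^ 5) - 4 / (3 * c\<^sup>2)\<bar>
           \<le> 2 * \<epsilon> * (1 / sqrt c ^ 5)"
    unfolding \<phi>_def by simp_all
qed

lemma lattice_sum_inv_square:
  fixes \<Psi> \<epsilon> s :: real
  assumes "\<Psi> > 0" and "\<epsilon> > 0"
  shows "(\<lambda>n::int. 1 / ((of_int n * \<epsilon> - s)\<^sup>2 + \<Psi>\<^sup>2)) summable_on UNIV"
    and "\<bar>\<epsilon> * (\<Sum>\<^sub>\<infinity>n::int. 1 / ((of_int n * \<epsilon> - s)\<^sup>2 + \<Psi>\<^sup>2)) - pi / \<Psi>\<bar> \<le> 2 * \<epsilon> * (1 / \<Psi>\<^sup>2)"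
proof -
  define \<phi> where "\<phi> t = 1 / (t + \<Psi>\<^sup>2)" for t
  have antitone: "\<phi> b \<le> \<phi> a" if "0 \<le> a" "a \<le> b" for a b
    unfolding \<phi>_def using that \<open>\<Psi> > 0\<close>
    by (intro divide_left_mono mult_pos_pos) (auto simp: add_nonneg_pos)
  have nonneg: "0 \<le> \<phi> t" if "0 \<le> t" for t
    unfolding \<phi>_def using that by simp
  define F where "F x = arctan ((x - s) / \<Psi>) / \<Psi>" for x
  have arctan_deriv: "inverse (1 + (y / \<Psi>)\<^sup>2) * (1 / \<Psi>) / \<Psi> = \<phi> (y\<^sup>2)" for y
  proof -
    have "inverse (1 + (y / \<Psi>)\<^sup>2) * (1 / \<Psi>) / \<Psi> = 1 / ((1 + (y / \<Psi>)\<^sup>2) * \<Psi>\<^sup>2)"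
      by (simp add: inverse_eq_divide power2_eq_square)
    also have "(1 + (y / \<Psi>)\<^sup>2) * \<Psi>\<^sup>2 = y\<^sup>2 + \<Psi>\<^sup>2"
      using \<open>\<Psi> > 0\<close> by (simp add: power_divide distrib_right)
    finally show ?thesis
      unfolding \<phi>_def .
  qed
  have F_deriv: "(F has_real_derivative \<phi> ((x - s)\<^sup>2)) (at x)" for x
    unfolding F_def[abs_def] arctan_deriv[symmetric]
    by (intro DERIV_cdivide DERIV_chain2[OF DERIV_arctan]) (auto intro!: derivative_eq_intros)
  have F_top: "(F \<longlongrightarrow> (pi / 2) / \<Psi>) at_top"
    unfolding F_def[abs_def] using \<open>\<Psi> > 0\<close>
    by (intro tendsto_intros filterlim_compose[OF tendsto_arctan_at_top]) (simp | real_asymp)+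
  have F_bot: "(F \<longlongrightarrow> (- (pi / 2)) / \<Psi>) at_bot"
    unfolding F_def[abs_def] using \<open>\<Psi> > 0\<close>
    by (intro tendsto_intros filterlim_compose[OF tendsto_arctan_at_bot]) (simp | real_asymp)+
  note lattice_sum_antitone_square_dist[OF \<open>\<epsilon> > 0\<close> antitone nonneg F_deriv F_top F_bot]
  moreover have "pi / 2 / \<Psi> - - (pi / 2) / \<Psi> = pi / \<Psi>"
    by (simp add: field_simps)
  ultimately show "(\<lambda>n::int. 1 / ((of_int n * \<epsilon> - s)\<^sup>2 + \<Psi>\<^sup>2)) summable_on UNIV"
    and "\<bar>\<epsilon> * (\<Sum>\<^sub>\<infinity>n::int. 1 / ((of_int n * \<epsilon> - s)\<^sup>2 + \<Psi>\<^sup>2)) - pi / \<Psi>\<bar> \<le> 2 * \<epsilon> * (1 / \<Psi>\<^sup>2)"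
    unfolding \<phi>_def by simp_all
qed

text \<open>Received power per unit area at the point \<open>(0, r_s y, r_s z)\<close> of the array plane, in
  coordinates scaled by \<open>r_s\<close> (see \<open>chan_entry_norm_sq\<close>); its integral over the plane is \<open>1 / 3\<close>.\<close>

definition power_density :: "real \<Rightarrow> real \<Rightarrow> real \<Rightarrow> real \<Rightarrow> real \<Rightarrow> real" where
  "power_density \<Psi> \<Phi> \<Omega> y z =
     \<Psi> * ((z - \<Omega>)\<^sup>2 + \<Psi>\<^sup>2) / (4 * pi * sqrt ((y - \<Phi>)\<^sup>2 + (z - \<Omega>)\<^sup>2 + \<Psi>\<^sup>2) ^ 5)"

definition lattice_power :: "real \<Rightarrow> real \<Rightarrow> real \<Rightarrow> real \<Rightarrow> real" where
  "lattice_power \<Psi> \<Phi> \<Omega> \<epsilon> =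
     \<epsilon>\<^sup>2 * infsum (\<lambda>(j, k). power_density \<Psi> \<Phi> \<Omega> (of_int j * \<epsilon>) (of_int k * \<epsilon>))
       (UNIV :: (int \<times> int) set)"

lemma power_density_row_estimate:
  fixes \<Psi> \<Phi> \<Omega> \<epsilon> :: real and k :: int
  assumes "\<Psi> > 0" and "\<epsilon> > 0"
  defines "c \<equiv> (of_int k * \<epsilon> - \<Omega>)\<^sup>2 + \<Psi>\<^sup>2"
  shows "(\<lambda>j::int. power_density \<Psi> \<Phi> \<Omega> (of_int j * \<epsilon>) (of_int k * \<epsilon>)) summable_on UNIV"
    and "\<bar>\<epsilon> * (\<Sum>\<^sub>\<infinity>j::int. power_density \<Psi> \<Phi> \<Omega> (of_int j * \<epsilon>) (of_int k * \<epsilon>)) - \<Psi> / (3 * pi) * (1 / c)\<bar>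
           \<le> \<epsilon> / (2 * pi) * (1 / c)"
proof -
  have "c > 0"
    using \<open>\<Psi> > 0\<close> by (simp add: c_def add_nonneg_pos)
  define q where "q = sqrt c"
  have "q > 0" and q2: "q\<^sup>2 = c" and "\<Psi> \<le> q"
    using \<open>c > 0\<close> \<open>\<Psi> > 0\<close> by (simp_all add: q_def c_def real_le_rsqrt)
  have row: "power_density \<Psi> \<Phi> \<Omega> (of_int j * \<epsilon>) (of_int k * \<epsilon>)
      = \<Psi> * c / (4 * pi) * (1 / sqrt ((of_int j * \<epsilon> - \<Phi>)\<^sup>2 + c) ^ 5)" for j
    by (simp add: power_density_def c_def add.assoc)
  define x where "x = \<epsilon> * (\<Sum>\<^sub>\<infinity>j::int. 1 / sqrt ((of_int j * \<epsilon> - \<Phi>)\<^sup>2 + c) ^ 5)"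
  note sums = lattice_sum_inv_pow5[OF \<open>c > 0\<close> \<open>\<epsilon> > 0\<close>, where s = \<Phi>, folded x_def]
  show "(\<lambda>j::int. power_density \<Psi> \<Phi> \<Omega> (of_int j * \<epsilon>) (of_int k * \<epsilon>)) summable_on UNIV"
    unfolding row by (intro summable_on_cmult_right sums(1))
  have "\<epsilon> * (\<Sum>\<^sub>\<infinity>j::int. power_density \<Psi> \<Phi> \<Omega> (of_int j * \<epsilon>) (of_int k * \<epsilon>)) - \<Psi> / (3 * pi) * (1 / c)
      = \<Psi> * c / (4 * pi) * (x - 4 / (3 * c\<^sup>2))"
    unfolding row infsum_cmult_right' x_def using \<open>c > 0\<close> by (simp add: field_simps power2_eq_square)
  then have "\<bar>\<epsilon> * (\<Sum>\<^sub>\<infinity>j::int. power_density \<Psi> \<Phi> \<Omega> (of_int j * \<epsilon>) (of_int k * \<epsilon>)) - \<Psi> / (3 * pi) * (1 / c)\<bar>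
      = \<Psi> * c / (4 * pi) * \<bar>x - 4 / (3 * c\<^sup>2)\<bar>"
    using \<open>c > 0\<close> \<open>\<Psi> > 0\<close> by (simp add: abs_mult)
  also have "\<dots> \<le> \<Psi> * c / (4 * pi) * (2 * \<epsilon> * (1 / q ^ 5))"
    using sums(2) \<open>c > 0\<close> \<open>\<Psi> > 0\<close> unfolding q_def by (intro mult_left_mono) auto
  also have "\<dots> = \<Psi> / q * (\<epsilon> / (2 * pi) * (1 / c))"
    using \<open>q > 0\<close> by (simp add: q2[symmetric] field_simps eval_nat_numeral)
  also have "\<dots> \<le> \<epsilon> / (2 * pi) * (1 / c)"
    using \<open>\<Psi> > 0\<close> \<open>\<Psi> \<le> q\<close> \<open>q > 0\<close> \<open>\<epsilon> > 0\<close> \<open>c > 0\<close> by (intro mult_left_le_one_le) auto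
  finally show "\<bar>\<epsilon> * (\<Sum>\<^sub>\<infinity>j::int. power_density \<Psi> \<Phi> \<Omega> (of_int j * \<epsilon>) (of_int k * \<epsilon>)) - \<Psi> / (3 * pi) * (1 / c)\<bar>
      \<le> \<epsilon> / (2 * pi) * (1 / c)" .
qed

lemma power_density_lattice_has_sum:
  fixes \<Psi> \<Phi> \<Omega> \<epsilon> :: real
  assumes "\<Psi> > 0" and "\<epsilon> > 0"
  shows "(\<lambda>k::int. \<Sum>\<^sub>\<infinity>j::int. power_density \<Psi> \<Phi> \<Omega> (of_int j * \<epsilon>) (of_int k * \<epsilon>)) summable_on UNIV"
    and "((\<lambda>(j, k). power_density \<Psi> \<Phi> \<Omega> (of_int j * \<epsilon>) (of_int k * \<epsilon>)) has_sum
           (\<Sum>\<^sub>\<infinity>k::int. \<Sum>\<^sub>\<infinity>j::int. power_density \<Psi> \<Phi> \<Omega> (of_int j * \<epsilon>) (of_int k * \<epsilon>))) UNIV"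
proof -
  define f where "f = (\<lambda>(k, j). power_density \<Psi> \<Phi> \<Omega> (of_int j * \<epsilon>) (of_int k * \<epsilon>))"
  define g where "g k = (\<Sum>\<^sub>\<infinity>j::int. f (k, j))" for k
  define K where "K = \<Psi> / (3 * pi) + \<epsilon> / (2 * pi)"
  note row = power_density_row_estimate[OF \<open>\<Psi> > 0\<close> \<open>\<epsilon> > 0\<close>, where \<Phi> = \<Phi> and \<Omega> = \<Omega>]
  have f_nonneg: "0 \<le> f (k, j)" for k j
    using \<open>\<Psi> > 0\<close> by (simp add: f_def power_density_def)
  have rows: "((\<lambda>j. f (k, j)) has_sum g k) UNIV" for k
    unfolding g_def f_def using row(1) by simp
  have "g summable_on UNIV"
  proof (rule summable_on_comparison_test)
    show "(\<lambda>k. 1 / \<epsilon> * (K * (1 / ((of_int k * \<epsilon> - \<Omega>)\<^sup>2 + \<Psi>\<^sup>2)))) summable_on UNIV"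
      by (intro summable_on_cmult_right lattice_sum_inv_square(1) \<open>\<Psi> > 0\<close> \<open>\<epsilon> > 0\<close>)
    show "0 \<le> g k" for k
      by (rule has_sum_nonneg[OF rows f_nonneg])
    have "\<epsilon> * g k \<le> K * (1 / ((of_int k * \<epsilon> - \<Omega>)\<^sup>2 + \<Psi>\<^sup>2))" for k
      using row(2)[of k] unfolding g_def f_def K_def prod.case distrib_right abs_le_iff by linarith
    from mult_left_mono[OF this, of "1 / \<epsilon>"]
    show "g k \<le> 1 / \<epsilon> * (K * (1 / ((of_int k * \<epsilon> - \<Omega>)\<^sup>2 + \<Psi>\<^sup>2)))" for k
      using \<open>\<epsilon> > 0\<close> by simp
  qed
  then show "(\<lambda>k::int. \<Sum>\<^sub>\<infinity>j::int. power_density \<Psi> \<Phi> \<Omega> (of_int j * \<epsilon>) (of_int k * \<epsilon>)) summable_on UNIV"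
    unfolding g_def[abs_def] f_def by simp
  from \<open>g summable_on UNIV\<close> have "(f has_sum (\<Sum>\<^sub>\<infinity>k. g k)) (UNIV \<times> UNIV)"
    using has_sum_SigmaI[OF rows has_sum_infsum summable_on_SigmaI[OF rows _ f_nonneg]] by blast
  then show "((\<lambda>(j, k). power_density \<Psi> \<Phi> \<Omega> (of_int j * \<epsilon>) (of_int k * \<epsilon>)) has_sum
           (\<Sum>\<^sub>\<infinity>k::int. \<Sum>\<^sub>\<infinity>j::int. power_density \<Psi> \<Phi> \<Omega> (of_int j * \<epsilon>) (of_int k * \<epsilon>))) UNIV"
    unfolding g_def[abs_def] by (subst (asm) has_sum_swap) (simp add: f_def)
qed

lemma lattice_power_estimate:
  fixes \<Psi> \<Phi> \<Omega> \<epsilon> :: real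
  assumes "\<Psi> > 0" and "\<epsilon> > 0"
  defines "W \<equiv> \<Sum>\<^sub>\<infinity>k::int. 1 / ((of_int k * \<epsilon> - \<Omega>)\<^sup>2 + \<Psi>\<^sup>2)"
  shows "\<bar>lattice_power \<Psi> \<Phi> \<Omega> \<epsilon> - \<Psi> / (3 * pi) * (\<epsilon> * W)\<bar> \<le> \<epsilon> / (2 * pi) * (\<epsilon> * W)"
proof -
  define c where "c k = (of_int k * \<epsilon> - \<Omega>)\<^sup>2 + \<Psi>\<^sup>2" for k :: int
  define g where "g k = (\<Sum>\<^sub>\<infinity>j::int. power_density \<Psi> \<Phi> \<Omega> (of_int j * \<epsilon>) (of_int k * \<epsilon>))" for k
  define a where "a = \<Psi> / (3 * pi)"
  define b where "b = \<epsilon> / (2 * pi)"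
  note row = power_density_row_estimate[OF \<open>\<Psi> > 0\<close> \<open>\<epsilon> > 0\<close>, where \<Phi> = \<Phi> and \<Omega> = \<Omega>]
  note lattice = power_density_lattice_has_sum[OF \<open>\<Psi> > 0\<close> \<open>\<epsilon> > 0\<close>, where \<Phi> = \<Phi> and \<Omega> = \<Omega>,
      folded g_def]
  have "lattice_power \<Psi> \<Phi> \<Omega> \<epsilon> = \<epsilon> * (\<Sum>\<^sub>\<infinity>k. \<epsilon> * g k)"
    by (simp add: lattice_power_def infsumI[OF lattice(2)] infsum_cmult_right' power2_eq_square)
  moreover have "W = (\<Sum>\<^sub>\<infinity>k. 1 / c k)"
    unfolding W_def c_def ..
  moreover have "(\<Sum>\<^sub>\<infinity>k. \<epsilon> * g k) \<le> (\<Sum>\<^sub>\<infinity>k. (a + b) * (1 / c k))"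
    and "(\<Sum>\<^sub>\<infinity>k. (a - b) * (1 / c k)) \<le> (\<Sum>\<^sub>\<infinity>k. \<epsilon> * g k)"
  proof -
    have c_summable: "(\<lambda>k. 1 / c k) summable_on UNIV"
      unfolding c_def by (rule lattice_sum_inv_square(1)[OF \<open>\<Psi> > 0\<close> \<open>\<epsilon> > 0\<close>])
    have summable: "(\<lambda>k. (a + b) * (1 / c k)) summable_on UNIV"
      "(\<lambda>k. (a - b) * (1 / c k)) summable_on UNIV" "(\<lambda>k. \<epsilon> * g k) summable_on UNIV"
      by (intro summable_on_cmult_right c_summable lattice(1))+
    have "\<epsilon> * g k \<le> (a + b) * (1 / c k)" and "(a - b) * (1 / c k) \<le> \<epsilon> * g k" for k
      using row(2)[of k] unfolding g_def c_def a_def b_def distrib_right left_diff_distrib abs_le_iff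
      by simp_all
    then show "(\<Sum>\<^sub>\<infinity>k. \<epsilon> * g k) \<le> (\<Sum>\<^sub>\<infinity>k. (a + b) * (1 / c k))"
      and "(\<Sum>\<^sub>\<infinity>k. (a - b) * (1 / c k)) \<le> (\<Sum>\<^sub>\<infinity>k. \<epsilon> * g k)"
      using infsum_mono[OF summable(3,1)] infsum_mono[OF summable(2,3)] by blast+
  qed
  ultimately show ?thesis
    using \<open>\<epsilon> > 0\<close> unfolding a_def[symmetric] b_def[symmetric] infsum_cmult_right'
    by (smt (verit) mult_left_mono left_diff_distrib' distrib_right mult.left_commute)
qed

lemma tendsto_lattice_power:
  assumes "\<Psi> > 0"
  shows "(lattice_power \<Psi> \<Phi> \<Omega> \<longlongrightarrow> 1 / 3) (at_right 0)"
proof -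
  define W where "W \<epsilon> = \<epsilon> * (\<Sum>\<^sub>\<infinity>k::int. 1 / ((of_int k * \<epsilon> - \<Omega>)\<^sup>2 + \<Psi>\<^sup>2))" for \<epsilon>
  have "\<forall>\<^sub>F \<epsilon> in at_right 0. norm (W \<epsilon> - pi / \<Psi>) \<le> 2 * \<epsilon> * (1 / \<Psi>\<^sup>2)"
    using eventually_at_right_less
  proof eventually_elim
    case (elim \<epsilon>)
    show ?case
      unfolding W_def real_norm_def by (rule lattice_sum_inv_square(2)[OF \<open>\<Psi> > 0\<close> elim])
  qed
  moreover have "((\<lambda>\<epsilon>. 2 * \<epsilon> * (1 / \<Psi>\<^sup>2)) \<longlongrightarrow> 0) (at_right 0)"
    by real_asymp
  ultimately have W: "(W \<longlongrightarrow> pi / \<Psi>) (at_right 0)"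
    by (rule LIM_zero_cancel[OF Lim_null_comparison])
  have "\<forall>\<^sub>F \<epsilon> in at_right 0.
      norm (lattice_power \<Psi> \<Phi> \<Omega> \<epsilon> - \<Psi> / (3 * pi) * W \<epsilon>) \<le> \<epsilon> / (2 * pi) * W \<epsilon>"
    using eventually_at_right_less
  proof eventually_elim
    case (elim \<epsilon>)
    show ?case
      unfolding W_def real_norm_def by (rule lattice_power_estimate[OF \<open>\<Psi> > 0\<close> elim])
  qed
  moreover have "((\<lambda>\<epsilon>. \<epsilon> / (2 * pi) * W \<epsilon>) \<longlongrightarrow> 0) (at_right 0)"
    using tendsto_mult[OF tendsto_divide[OF tendsto_ident_at tendsto_const] W] by simp
  ultimately have "((\<lambda>\<epsilon>. lattice_power \<Psi> \<Phi> \<Omega> \<epsilon> - \<Psi> / (3 * pi) * W \<epsilon>) \<longlongrightarrow> 0) (at_right 0)"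
    by (rule Lim_null_comparison)
  then have "((\<lambda>\<epsilon>. lattice_power \<Psi> \<Phi> \<Omega> \<epsilon> - \<Psi> / (3 * pi) * W \<epsilon> + \<Psi> / (3 * pi) * W \<epsilon>)
      \<longlongrightarrow> 0 + \<Psi> / (3 * pi) * (pi / \<Psi>)) (at_right 0)"
    by (intro tendsto_add tendsto_mult_left W)
  then show ?thesis
    using \<open>\<Psi> > 0\<close> by simp
qed

section \<open>The near-field channel\<close>

lemma chan_entry_norm_sq:
  assumes "r > 0" and "d > 0" and "A \<ge> 0" and "Psi_s \<theta> \<phi> \<ge> 0"
  shows "(cmod (chan_entry A d lam r \<theta> \<phi> ny nz))\<^sup>2 = A / d\<^sup>2 * ((d / r)\<^sup>2 *
           power_density (Psi_s \<theta> \<phi>) (Phi_s \<theta> \<phi>) (Omega_s \<theta>) (of_int ny * (d / r)) (of_int nz * (d / r)))"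
proof -
  define \<Psi> \<Phi> \<Omega> \<epsilon> where "\<Psi> = Psi_s \<theta> \<phi>" and "\<Phi> = Phi_s \<theta> \<phi>" and "\<Omega> = Omega_s \<theta>" and "\<epsilon> = d / r"
  define c where "c = (of_int nz * \<epsilon> - \<Omega>)\<^sup>2 + \<Psi>\<^sup>2"
  define \<rho> where "\<rho> = sqrt ((of_int ny * \<epsilon> - \<Phi>)\<^sup>2 + (of_int nz * \<epsilon> - \<Omega>)\<^sup>2 + \<Psi>\<^sup>2)"
  have "elem_dist d r \<theta> \<phi> ny nz = r * \<rho>"
    by (simp add: elem_dist_def \<rho>_def \<Psi>_def \<Phi>_def \<Omega>_def \<epsilon>_def)
  moreover have "r ^ 3 * \<Psi> ^ 3 + r * \<Psi> * (r * \<Omega> - of_int nz * d)\<^sup>2 = r ^ 3 * \<Psi> * c"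
    using \<open>r > 0\<close> by (simp add: c_def \<epsilon>_def field_simps power2_eq_square power3_eq_cube)
  ultimately have "chan_entry A d lam r \<theta> \<phi> ny nz
      = complex_of_real (sqrt (A * (r ^ 3 * \<Psi> * c) / (4 * pi * (r * \<rho>) ^ 5))) * cis (- (2 * pi / lam) * (r * \<rho>))"
    by (simp add: chan_entry_def Let_def \<Psi>_def \<Omega>_def)
  moreover have "A * (r ^ 3 * \<Psi> * c) / (4 * pi * (r * \<rho>) ^ 5) = A / d\<^sup>2 * (\<epsilon>\<^sup>2 * (\<Psi> * c / (4 * pi * \<rho> ^ 5)))"
    using \<open>r > 0\<close> \<open>d > 0\<close> by (simp add: \<epsilon>_def field_simps eval_nat_numeral)
  moreover have "power_density \<Psi> \<Phi> \<Omega> (of_int ny * \<epsilon>) (of_int nz * \<epsilon>) = \<Psi> * c / (4 * pi * \<rho> ^ 5)"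
    by (simp add: power_density_def c_def \<rho>_def)
  moreover have "0 \<le> A / d\<^sup>2 * (\<epsilon>\<^sup>2 * (\<Psi> * c / (4 * pi * \<rho> ^ 5)))"
    using \<open>A \<ge> 0\<close> \<open>Psi_s \<theta> \<phi> \<ge> 0\<close> by (simp add: \<Psi>_def c_def \<rho>_def)
  ultimately show ?thesis
    unfolding \<Psi>_def[symmetric] \<Phi>_def[symmetric] \<Omega>_def[symmetric] \<epsilon>_def[symmetric]
    by (simp add: norm_mult)
qed

lemma tendsto_chan_norm_sq:
  assumes "r > 0" and "d > 0" and "A \<ge> 0" and "Psi_s \<theta> \<phi> > 0"
  shows "((\<lambda>(My, Mz). (chan_norm A d lam r \<theta> \<phi> My Mz)\<^sup>2)
           \<longlongrightarrow> A / d\<^sup>2 * lattice_power (Psi_s \<theta> \<phi>) (Phi_s \<theta> \<phi>) (Omega_s \<theta>) (d / r))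
         (sequentially \<times>\<^sub>F sequentially)"
proof -
  define gain where "gain = (\<lambda>(ny, nz). (cmod (chan_entry A d lam r \<theta> \<phi> ny nz))\<^sup>2)"
  define pd where "pd = (\<lambda>(j, k). power_density (Psi_s \<theta> \<phi>) (Phi_s \<theta> \<phi>) (Omega_s \<theta>)
                           (of_int j * (d / r)) (of_int k * (d / r)))"
  have "pd summable_on UNIV"
    using power_density_lattice_has_sum(2)[of "Psi_s \<theta> \<phi>" "d / r"] assms
    unfolding pd_def summable_on_def by auto
  then have "((\<lambda>x. A / d\<^sup>2 * ((d / r)\<^sup>2 * pd x)) has_sum A / d\<^sup>2 * ((d / r)\<^sup>2 * infsum pd UNIV)) UNIV"
    by (intro has_sum_cmult_right has_sum_infsum)
  moreover have "gain = (\<lambda>x. A / d\<^sup>2 * ((d / r)\<^sup>2 * pd x))"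
    using assms by (auto simp: gain_def pd_def chan_entry_norm_sq)
  ultimately have "(gain has_sum A / d\<^sup>2 * lattice_power (Psi_s \<theta> \<phi>) (Phi_s \<theta> \<phi>) (Omega_s \<theta>) (d / r)) UNIV"
    by (simp add: lattice_power_def pd_def)
  moreover have "(chan_norm A d lam r \<theta> \<phi> My Mz)\<^sup>2 = (\<Sum>x\<in>{- int My..int My} \<times> {- int Mz..int Mz}. gain x)"
    for My Mz
    by (simp add: chan_norm_def gain_def sum.cartesian_product case_prod_unfold sum_nonneg)
  ultimately show ?thesis
    using has_sum_imp_tendsto_rectangle_sums by (simp add: case_prod_unfold)
qed

lemma tendsto_lattice_power_far_field:
  assumes "\<Psi> > 0" and "d > 0"
  shows "((\<lambda>r. lattice_power \<Psi> \<Phi> \<Omega> (d / r)) \<longlongrightarrow> 1 / 3) at_top"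
proof -
  have "filterlim (\<lambda>r. d / r) (at_right 0) at_top"
    using \<open>d > 0\<close> by real_asymp
  then show ?thesis
    by (rule filterlim_compose[OF tendsto_lattice_power[OF \<open>\<Psi> > 0\<close>]])
qed

lemma tendsto_log_rate:
  fixes f :: "'a \<Rightarrow> real"
  assumes "0 \<le> \<kappa>" and "(f \<longlongrightarrow> x) F"
  shows "((\<lambda>y. 1 / real L * log 2 (1 + \<kappa> * (f y)\<^sup>2)) \<longlongrightarrow> 1 / real L * log 2 (1 + \<kappa> * x\<^sup>2)) F"
proof -
  have "0 < 1 + \<kappa> * x\<^sup>2"
    using assms(1) by (simp add: add_pos_nonneg)
  then show ?thesis
    using assms(2) by (intro tendsto_intros) auto
qed

theorem corollary5:
  fixes p \<alpha> A d lam \<theta> \<phi> :: real and L :: nat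
  assumes "p > 0" and "L > 0" and "\<alpha> > 0"
    and "A > 0" and "d > sqrt A" and "lam > 0"
    and "0 \<le> \<theta>" and "\<theta> \<le> pi" and "- (pi / 2) \<le> \<phi>" and "\<phi> \<le> pi / 2"
    and "Psi_s \<theta> \<phi> > 0"
  shows "\<exists>Rlim :: real \<Rightarrow> real.
           (\<forall>r > 0. ((\<lambda>(My, Mz). sensing_rate p L \<alpha> A d lam r \<theta> \<phi> My Mz)
                        \<longlongrightarrow> Rlim r) (sequentially \<times>\<^sub>F sequentially))
         \<and> (Rlim \<longlongrightarrow> 1 / real L * log 2 (1 + p * real L * \<alpha> * (A / d\<^sup>2)\<^sup>2 / 9)) at_top"
proof -
  have "d > 0"
    using assms(4,5) by (meson less_trans real_sqrt_gt_zero)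
  have rate_weight: "0 \<le> p * real L * \<alpha>"
    using assms(1-3) by simp
  define Rlim where "Rlim r = 1 / real L * log 2 (1 + p * real L * \<alpha> *
      (A / d\<^sup>2 * lattice_power (Psi_s \<theta> \<phi>) (Phi_s \<theta> \<phi>) (Omega_s \<theta>) (d / r))\<^sup>2)" for r
  show ?thesis
  proof (intro exI[of _ Rlim] conjI allI impI)
    fix r :: real
    assume "r > 0"
    show "((\<lambda>(My, Mz). sensing_rate p L \<alpha> A d lam r \<theta> \<phi> My Mz) \<longlongrightarrow> Rlim r) (sequentially \<times>\<^sub>F sequentially)"
      using tendsto_log_rate[OF rate_weight
          tendsto_chan_norm_sq[OF \<open>r > 0\<close> \<open>d > 0\<close> less_imp_le[OF assms(4)] assms(11)]]
      by (simp add: Rlim_def sensing_rate_def case_prod_unfold flip: power_mult)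
  next
    have "(Rlim \<longlongrightarrow> 1 / real L * log 2 (1 + p * real L * \<alpha> * (A / d\<^sup>2 * (1 / 3))\<^sup>2)) at_top"
      unfolding Rlim_def
      by (intro tendsto_log_rate rate_weight tendsto_mult_left tendsto_lattice_power_far_field assms(11) \<open>d > 0\<close>)
    moreover have "(A / d\<^sup>2 * (1 / 3))\<^sup>2 = (A / d\<^sup>2)\<^sup>2 / 9"
      by (simp add: power_mult_distrib power_divide)
    ultimately show "(Rlim \<longlongrightarrow> 1 / real L * log 2 (1 + p * real L * \<alpha> * (A / d\<^sup>2)\<^sup>2 / 9)) at_top"
      by (simp only: times_divide_eq_right)
  qed
qed

end
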